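(* Let $G$ be a finite Abelian group of order $n$, $H$ its Fourier matrix (rows and columns indexed by $G$), and $A$ an $n\times n$ flat matrix with rows $(R_i)_{i\in G}$ and columns $v_1,\dots,v_n$. For $r=1,\dots,n$ let $M_r=\frac1{\sqrt n}\operatorname{diag}(v_r)H$. Then $\{M_1,\dots,M_n\}$ is a complete system of mutually unbiased Hadamards if and only if for every nonzero $\Delta\in G$ the matrix $D_\Delta$ whose rows are $R_{i+\Delta}\circ R_i^{(-1)}$, $i\in G$, has pairwise orthogonal rows.
   Context: A flat matrix is a complex matrix all of whose entries have absolute value $1$. Writing $G=\mathbb{Z}_{d_1}\times\cdots\times\mathbb{Z}_{d_m}$, the Fourier matrix is $(\chi_j(i))_{i,j\in G}$ with $\chi_a(b)=\exp(\sum_j\frac{2\pi i}{d_j}a_jb_j)$. $\circ$ is the entrywise product and $R^{(-1)}$ the entrywise inverse. A complex Hadamard matrix is a unitary $n\times n$ matrix all of whose entries have absolute value $1/\sqrt n$; two are mutually unbiased if $|\langle x|y\rangle|=1/\sqrt n$ for every column $x$ of one and column $y$ of the other ($\langle x|y\rangle=\sum_t\overline{x_t}y_t$); a complete system of mutually unbiased Hadamards is a set of $n$ pairwise mutually unbiased complex Hadamard $n\times n$ matrices. *)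

theory Defs
  imports Complex_Main
begin

text \<open>The group G = Z_{d_1} x ... x Z_{d_m}, given by the list ds = [d_1,...,d_m];
  elements are lists a of length m with a!j < d_j.\<close>

definition grp :: "nat list \<Rightarrow> nat list set" where
  "grp ds = {a. length a = length ds \<and> (\<forall>j<length ds. a ! j < ds ! j)}"

definition gadd :: "nat list \<Rightarrow> nat list \<Rightarrow> nat list \<Rightarrow> nat list" where
  "gadd ds a b = map (\<lambda>j. (a ! j + b ! j) mod (ds ! j)) [0..<length ds]"

definition gzero :: "nat list \<Rightarrow> nat list" where
  "gzero ds = replicate (length ds) 0"

definition chr :: "nat list \<Rightarrow> nat list \<Rightarrow> nat list \<Rightarrow> complex" where
  "chr ds a b = exp (\<Sum>j<length ds. 2 * of_real pi * \<i> * of_nat (a ! j) * of_nat (b ! j) / of_nat (ds ! j))"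

definition fourier :: "nat list \<Rightarrow> nat list \<Rightarrow> nat list \<Rightarrow> complex" where
  "fourier ds i j = chr ds j i"

text \<open>Matrices indexed by a finite set I (rows and columns), as functions.\<close>
definition flat :: "'i set \<Rightarrow> ('i \<Rightarrow> 'i \<Rightarrow> complex) \<Rightarrow> bool" where
  "flat I A \<longleftrightarrow> (\<forall>i\<in>I. \<forall>j\<in>I. norm (A i j) = 1)"

definition braket :: "'i set \<Rightarrow> ('i \<Rightarrow> complex) \<Rightarrow> ('i \<Rightarrow> complex) \<Rightarrow> complex" where
  "braket I x y = (\<Sum>t\<in>I. cnj (x t) * y t)"

definition col :: "('i \<Rightarrow> 'i \<Rightarrow> complex) \<Rightarrow> 'i \<Rightarrow> 'i \<Rightarrow> complex" where
  "col M j = (\<lambda>i. M i j)"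

text \<open>Unitary: M^* M = I (for square matrices this is unitarity).\<close>
definition unitary_mat :: "'i set \<Rightarrow> ('i \<Rightarrow> 'i \<Rightarrow> complex) \<Rightarrow> bool" where
  "unitary_mat I M \<longleftrightarrow>
     (\<forall>j\<in>I. \<forall>k\<in>I. (\<Sum>i\<in>I. cnj (M i j) * M i k) = (if j = k then 1 else 0))"

definition complex_hadamard :: "'i set \<Rightarrow> ('i \<Rightarrow> 'i \<Rightarrow> complex) \<Rightarrow> bool" where
  "complex_hadamard I M \<longleftrightarrow> unitary_mat I M \<and>
     (\<forall>i\<in>I. \<forall>j\<in>I. norm (M i j) = 1 / sqrt (real (card I)))"

definition mutually_unbiased :: "'i set \<Rightarrow> ('i \<Rightarrow> 'i \<Rightarrow> complex) \<Rightarrow> ('i \<Rightarrow> 'i \<Rightarrow> complex) \<Rightarrow> bool" where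
  "mutually_unbiased I M N \<longleftrightarrow>
     (\<forall>j\<in>I. \<forall>k\<in>I. norm (braket I (col M j) (col N k)) = 1 / sqrt (real (card I)))"

definition complete_MUH :: "'i set \<Rightarrow> 'r set \<Rightarrow> ('r \<Rightarrow> 'i \<Rightarrow> 'i \<Rightarrow> complex) \<Rightarrow> bool" where
  "complete_MUH I R M \<longleftrightarrow> card R = card I \<and>
     (\<forall>r\<in>R. complex_hadamard I (M r)) \<and>
     (\<forall>r\<in>R. \<forall>s\<in>R. r \<noteq> s \<longrightarrow> mutually_unbiased I (M r) (M s))"

text \<open>M_r = (1/sqrt n) diag(v_r) H, where v_r is the r-th column of A.\<close>
definition Mmat :: "nat list \<Rightarrow> (nat list \<Rightarrow> nat list \<Rightarrow> complex) \<Rightarrow> nat list \<Rightarrow> nat list \<Rightarrow> nat list \<Rightarrow> complex" where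
  "Mmat ds A r i j = A i r * fourier ds i j / of_real (sqrt (real (card (grp ds))))"

definition Dmat :: "nat list \<Rightarrow> (nat list \<Rightarrow> nat list \<Rightarrow> complex) \<Rightarrow> nat list \<Rightarrow> nat list \<Rightarrow> nat list \<Rightarrow> complex" where
  "Dmat ds A \<Delta> i j = A (gadd ds i \<Delta>) j * inverse (A i j)"

definition orthogonal_rows :: "'i set \<Rightarrow> ('i \<Rightarrow> 'i \<Rightarrow> complex) \<Rightarrow> bool" where
  "orthogonal_rows I D \<longleftrightarrow>
     (\<forall>i\<in>I. \<forall>i'\<in>I. i \<noteq> i' \<longrightarrow> braket I (D i) (D i') = 0)"

end

theory Submission
  imports Defs "HOL-Analysis.Complex_Transcendental"
begin

(* Each M_r = diag(v_r) H / sqrt n is automatically a complex Hadamard matrix, so the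
   theorem is about mutual unbiasedness.  For r <> s the inner product of column j of
   M_r with column k of M_s is T_jk / n, where T_jk = sum_i w(i) conj(chi_j(i)) chi_k(i)
   is a twisted character sum of w(i) = conj(A_ir) A_is.  Expanding |T_jk|^2 and
   substituting i = i' + Delta gives sum_Delta conj(chi_j(Delta)) chi_k(Delta) c(Delta),
   where c is the autocorrelation of w with c(0) = n.  By Fourier inversion these sums all
   equal n iff c vanishes off 0, and c(Delta) is exactly the inner product of columns r
   and s of D_Delta.  Finally, a flat square matrix has orthogonal columns iff it has
   orthogonal rows, by comparing the Frobenius norms of the two Gram matrices. *)


lemma cnj_mult_unit: "norm (z::complex) = 1 \<Longrightarrow> cnj z * z = 1"
  by (metis complex_norm_square mult.commute of_real_1 power_one)

lemma inverse_unit: "norm (z::complex) = 1 \<Longrightarrow> inverse z = cnj z"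
  by (rule inverse_unique) (metis cnj_mult_unit mult.commute)


section \<open>The group Z_{d_1} x ... x Z_{d_m}\<close>

lemma grp_finite: "finite (grp ds)"
proof (rule finite_subset)
  show "grp ds \<subseteq> {a. set a \<subseteq> {..<Max (insert 0 (set ds))} \<and> length a = length ds}"
    by (force simp: grp_def in_set_conv_nth intro: less_le_trans[OF _ Max_ge])
  show "finite {a. set a \<subseteq> {..<Max (insert 0 (set ds))} \<and> length a = length ds}"
    by (rule finite_lists_length_eq) simp
qed

lemma gzero_in_grp: "\<forall>d\<in>set ds. 0 < d \<Longrightarrow> gzero ds \<in> grp ds"
  by (auto simp: gzero_def grp_def)

lemma card_grp_pos: "\<forall>d\<in>set ds. 0 < d \<Longrightarrow> 0 < card (grp ds)"
  using grp_finite gzero_in_grp by (auto simp: card_gt_0_iff)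

lemma gadd_nth: "j < length ds \<Longrightarrow> gadd ds a b ! j = (a ! j + b ! j) mod (ds ! j)"
  by (simp add: gadd_def)

lemma gadd_in_grp: "\<forall>d\<in>set ds. 0 < d \<Longrightarrow> gadd ds a b \<in> grp ds"
  by (auto simp: grp_def gadd_def)

lemma gadd_commute: "gadd ds a b = gadd ds b a"
  by (simp add: gadd_def add.commute)

lemma gadd_gzero: "a \<in> grp ds \<Longrightarrow> gadd ds a (gzero ds) = a"
  by (auto simp: grp_def gadd_def gzero_def intro!: nth_equalityI)

lemma add_mod_right_cancel:
  fixes x y b d :: nat
  assumes "(x + b) mod d = (y + b) mod d" and "x < d" and "y < d"
  shows "x = y"
proof -
  have "(int x + int b) mod int d = (int y + int b) mod int d"
    using assms(1) by (metis of_nat_add of_nat_mod)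
  then have "(int x + int b - int b) mod int d = (int y + int b - int b) mod int d"
    by (metis mod_diff_left_eq)
  then show ?thesis using assms(2,3) by simp
qed

lemma translation_bij:
  assumes pos: "\<forall>d\<in>set ds. 0 < d"
  shows "bij_betw (\<lambda>a. gadd ds a b) (grp ds) (grp ds)"
proof -
  have inj: "inj_on (\<lambda>a. gadd ds a b) (grp ds)"
  proof (rule inj_onI)
    fix x y assume x: "x \<in> grp ds" and y: "y \<in> grp ds" and eq: "gadd ds x b = gadd ds y b"
    show "x = y"
    proof (rule nth_equalityI)
      show "length x = length y" using x y by (simp add: grp_def)
      fix j assume "j < length x"
      then have j: "j < length ds" using x by (simp add: grp_def)
      have "(x ! j + b ! j) mod (ds ! j) = (y ! j + b ! j) mod (ds ! j)"
        using eq gadd_nth[OF j] by metis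
      moreover have "x ! j < ds ! j" "y ! j < ds ! j" using x y j by (auto simp: grp_def)
      ultimately show "x ! j = y ! j" by (rule add_mod_right_cancel)
    qed
  qed
  moreover have "(\<lambda>a. gadd ds a b) ` grp ds = grp ds"
    using endo_inj_surj[OF grp_finite _ inj] gadd_in_grp[OF pos] by blast
  ultimately show ?thesis by (simp add: bij_betw_def)
qed

lemma sum_translate:
  "\<forall>d\<in>set ds. 0 < d \<Longrightarrow> (\<Sum>a\<in>grp ds. f (gadd ds a b)) = (\<Sum>a\<in>grp ds. f a)"
  using sum.reindex_bij_betw[OF translation_bij] by blast


section \<open>Characters\<close>

lemma root_of_unity_mod:
  assumes "0 < d"
  shows "exp (2 * of_real pi * \<i> * of_nat c * of_nat (x mod d) / of_nat d) =
         exp (2 * of_real pi * \<i> * of_nat c * of_nat x / of_nat d)"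
proof -
  have "(of_nat x :: complex) = of_nat (x mod d) + of_nat d * of_nat (x div d)"
    by (metis of_nat_add of_nat_mult mod_mult_div_eq)
  then have "2 * of_real pi * \<i> * of_nat c * of_nat x / of_nat d =
        2 * of_real pi * \<i> * of_nat c * of_nat (x mod d) / of_nat d
          + \<i> * (of_nat (c * (x div d)) * (of_real pi * 2))"
    using assms by (simp add: field_simps)
  then show ?thesis by (simp only: exp_add exp_2pi_1_nat mult_1_right)
qed

lemma chr_as_prod:
  "chr ds a b = (\<Prod>j<length ds. exp (2 * of_real pi * \<i> * of_nat (a ! j) * of_nat (b ! j) / of_nat (ds ! j)))"
  unfolding chr_def by (simp add: exp_sum)

lemma chr_gadd:
  assumes pos: "\<forall>d\<in>set ds. 0 < d"
  shows "chr ds c (gadd ds a b) = chr ds c a * chr ds c b"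
  unfolding chr_as_prod prod.distrib[symmetric]
proof (rule prod.cong[OF refl])
  fix j assume j: "j \<in> {..<length ds}"
  then have d: "0 < ds ! j" using pos by auto
  show "exp (2 * of_real pi * \<i> * of_nat (c ! j) * of_nat (gadd ds a b ! j) / of_nat (ds ! j)) =
      exp (2 * of_real pi * \<i> * of_nat (c ! j) * of_nat (a ! j) / of_nat (ds ! j)) *
      exp (2 * of_real pi * \<i> * of_nat (c ! j) * of_nat (b ! j) / of_nat (ds ! j))"
    using j unfolding gadd_nth[OF j[simplified]] root_of_unity_mod[OF d]
    by (simp add: exp_add[symmetric] add_divide_distrib algebra_simps)
qed

lemma chr_commute: "chr ds a b = chr ds b a"
  unfolding chr_def by (simp add: mult_ac)

lemma norm_chr [simp]: "norm (chr ds a b) = 1"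
  by (simp add: chr_def)

lemma chr_gzero [simp]: "chr ds c (gzero ds) = 1" "chr ds (gzero ds) c = 1"
  by (simp_all add: chr_as_prod gzero_def)

lemma root_of_unity_ne_1:
  fixes k :: int
  assumes "k \<noteq> 0" and "\<bar>k\<bar> < int d"
  shows "exp (2 * of_real pi * \<i> * of_int k / of_nat d) \<noteq> 1"
proof
  assume "exp (2 * of_real pi * \<i> * of_int k / of_nat d) = 1"
  then obtain n :: int where "2 * pi * real_of_int k / real d = real_of_int (2 * n) * pi"
    by (auto simp: exp_eq_1)
  then have "real_of_int k = real_of_int (n * int d)"
    using assms by (simp add: field_simps)
  then have "k = n * int d" by (simp only: of_int_eq_iff)
  with assms show False by (cases "n = 0") (auto simp: abs_mult dest: mult_right_mono[of 1 "\<bar>n\<bar>" "int d"])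
qed

text \<open>A function that is multiplicative along translations by e, with value \<noteq> 1 at e,
  sums to zero over G: translating by e multiplies the sum by that value.\<close>
lemma sum_multiplicative_eq_0:
  fixes g :: "nat list \<Rightarrow> complex"
  assumes pos: "\<forall>d\<in>set ds. 0 < d"
    and mult: "\<And>a. g (gadd ds a e) = g a * g e" and ne: "g e \<noteq> 1"
  shows "(\<Sum>a\<in>grp ds. g a) = 0"
proof -
  have "(\<Sum>a\<in>grp ds. g a) = (\<Sum>a\<in>grp ds. g (gadd ds a e))"
    by (rule sum_translate[OF pos, symmetric])
  also have "\<dots> = (\<Sum>a\<in>grp ds. g a) * g e"
    unfolding mult by (rule sum_distrib_right[symmetric])
  finally have "(\<Sum>a\<in>grp ds. g a) * (1 - g e) = 0" by (simp add: algebra_simps)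
  with ne show ?thesis by simp
qed

lemma chr_orthogonal:
  assumes pos: "\<forall>d\<in>set ds. 0 < d" and a: "a \<in> grp ds" and b: "b \<in> grp ds"
  shows "(\<Sum>i\<in>grp ds. cnj (chr ds a i) * chr ds b i) = (if a = b then of_nat (card (grp ds)) else 0)"
proof (cases "a = b")
  case False
  have "length a = length ds" "length b = length ds" using a b by (auto simp: grp_def)
  with False obtain j where j: "j < length ds" "a ! j \<noteq> b ! j"
    using nth_equalityI by metis
  have lt: "a ! j < ds ! j" "b ! j < ds ! j" using a b j by (auto simp: grp_def)
  define e where "e = (gzero ds)[j := 1]"
  have chr_e: "chr ds c e = exp (2 * of_real pi * \<i> * of_nat (c ! j) / of_nat (ds ! j))" for c
  proof -
    have "chr ds c e = (\<Prod>l<length ds. if l = j then exp (2 * of_real pi * \<i> * of_nat (c ! j) / of_nat (ds ! j)) else 1)"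
      unfolding chr_as_prod by (rule prod.cong) (auto simp: e_def gzero_def nth_list_update)
    then show ?thesis using j by simp
  qed
  have "cnj (chr ds a e) * chr ds b e = exp (2 * of_real pi * \<i> * of_int (int (b ! j) - int (a ! j)) / of_nat (ds ! j))"
    by (simp add: chr_e exp_cnj exp_add[symmetric] diff_divide_distrib algebra_simps)
  also have "\<dots> \<noteq> 1"
    using j lt by (intro root_of_unity_ne_1) auto
  finally have "(\<Sum>i\<in>grp ds. cnj (chr ds a i) * chr ds b i) = 0"
    by (intro sum_multiplicative_eq_0[OF pos]) (simp_all add: chr_gadd[OF pos] mult_ac)
  with False show ?thesis by simp
qed (simp add: cnj_mult_unit)


section \<open>Fourier inversion on G\<close>

lemma fourier_transform_injective:
  assumes pos: "\<forall>d\<in>set ds. 0 < d"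
    and zero: "\<forall>k\<in>grp ds. (\<Sum>\<Delta>\<in>grp ds. chr ds k \<Delta> * g \<Delta>) = 0" and x: "x \<in> grp ds"
  shows "g x = 0"
proof -
  have "0 = (\<Sum>k\<in>grp ds. cnj (chr ds k x) * (\<Sum>\<Delta>\<in>grp ds. chr ds k \<Delta> * g \<Delta>))"
    using zero by simp
  also have "\<dots> = (\<Sum>k\<in>grp ds. \<Sum>\<Delta>\<in>grp ds. g \<Delta> * (cnj (chr ds x k) * chr ds \<Delta> k))"
    unfolding sum_distrib_left
  proof (intro sum.cong refl)
    fix k \<Delta>
    show "cnj (chr ds k x) * (chr ds k \<Delta> * g \<Delta>) = g \<Delta> * (cnj (chr ds x k) * chr ds \<Delta> k)"
      by (simp only: chr_commute[of ds k] mult_ac)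
  qed
  also have "\<dots> = (\<Sum>\<Delta>\<in>grp ds. g \<Delta> * (\<Sum>k\<in>grp ds. cnj (chr ds x k) * chr ds \<Delta> k))"
    unfolding sum_distrib_left by (rule sum.swap)
  also have "\<dots> = (\<Sum>\<Delta>\<in>grp ds. if \<Delta> = x then g x * of_nat (card (grp ds)) else 0)"
    by (rule sum.cong) (auto simp: chr_orthogonal[OF pos x])
  also have "\<dots> = g x * of_nat (card (grp ds))"
    using x grp_finite by simp
  finally show ?thesis using card_grp_pos[OF pos] by simp
qed

lemma twisted_transforms_constant_iff:
  assumes pos: "\<forall>d\<in>set ds. 0 < d" and f0: "f (gzero ds) = of_nat (card (grp ds))"
  shows "(\<forall>j\<in>grp ds. \<forall>k\<in>grp ds.
            (\<Sum>\<Delta>\<in>grp ds. cnj (chr ds j \<Delta>) * chr ds k \<Delta> * f \<Delta>) = of_nat (card (grp ds)))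
    \<longleftrightarrow> (\<forall>\<Delta>\<in>grp ds. \<Delta> \<noteq> gzero ds \<longrightarrow> f \<Delta> = 0)"
proof
  let ?n = "of_nat (card (grp ds)) :: complex"
  have z: "gzero ds \<in> grp ds" using gzero_in_grp[OF pos] .
  assume all: "\<forall>j\<in>grp ds. \<forall>k\<in>grp ds. (\<Sum>\<Delta>\<in>grp ds. cnj (chr ds j \<Delta>) * chr ds k \<Delta> * f \<Delta>) = ?n"
  define g where "g \<Delta> = f \<Delta> - (if \<Delta> = gzero ds then ?n else 0)" for \<Delta>
  have transform_g: "\<forall>k\<in>grp ds. (\<Sum>\<Delta>\<in>grp ds. chr ds k \<Delta> * g \<Delta>) = 0"
  proof
    fix k assume k: "k \<in> grp ds"
    have "(\<Sum>\<Delta>\<in>grp ds. cnj (chr ds (gzero ds) \<Delta>) * chr ds k \<Delta> * f \<Delta>) = ?n"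
      using all z k by blast
    then have transform_f: "(\<Sum>\<Delta>\<in>grp ds. chr ds k \<Delta> * f \<Delta>) = ?n" by simp
    have "(\<Sum>\<Delta>\<in>grp ds. chr ds k \<Delta> * (if \<Delta> = gzero ds then ?n else 0))
        = (\<Sum>\<Delta>\<in>grp ds. if \<Delta> = gzero ds then ?n else 0)"
      by (rule sum.cong) simp_all
    also have "\<dots> = ?n" using z grp_finite by simp
    finally show "(\<Sum>\<Delta>\<in>grp ds. chr ds k \<Delta> * g \<Delta>) = 0"
      by (simp add: g_def right_diff_distrib sum_subtractf transform_f)
  qed
  show "\<forall>\<Delta>\<in>grp ds. \<Delta> \<noteq> gzero ds \<longrightarrow> f \<Delta> = 0"
  proof (intro ballI impI)
    fix \<Delta> assume "\<Delta> \<in> grp ds" and "\<Delta> \<noteq> gzero ds"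
    then show "f \<Delta> = 0"
      using fourier_transform_injective[OF pos transform_g] by (simp add: g_def)
  qed
next
  assume "\<forall>\<Delta>\<in>grp ds. \<Delta> \<noteq> gzero ds \<longrightarrow> f \<Delta> = 0"
  then have "(\<Sum>\<Delta>\<in>grp ds. cnj (chr ds j \<Delta>) * chr ds k \<Delta> * f \<Delta>)
           = (\<Sum>\<Delta>\<in>grp ds. if \<Delta> = gzero ds then of_nat (card (grp ds)) else 0)" for j k
    by (intro sum.cong) (simp_all add: f0)
  then show "\<forall>j\<in>grp ds. \<forall>k\<in>grp ds.
      (\<Sum>\<Delta>\<in>grp ds. cnj (chr ds j \<Delta>) * chr ds k \<Delta> * f \<Delta>) = of_nat (card (grp ds))"
    using gzero_in_grp[OF pos] grp_finite by simp
qed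


section \<open>Autocorrelation\<close>

definition autocorr :: "nat list \<Rightarrow> (nat list \<Rightarrow> complex) \<Rightarrow> nat list \<Rightarrow> complex" where
  "autocorr ds w \<Delta> = (\<Sum>i\<in>grp ds. w (gadd ds i \<Delta>) * cnj (w i))"

lemma norm_sq_sum_autocorr:
  assumes pos: "\<forall>d\<in>set ds. 0 < d"
    and hom: "\<And>a b. psi (gadd ds a b) = psi a * psi b" and unit: "\<And>a. norm (psi a) = 1"
  shows "(\<Sum>i\<in>grp ds. w i * psi i) * cnj (\<Sum>i\<in>grp ds. w i * psi i)
       = (\<Sum>\<Delta>\<in>grp ds. psi \<Delta> * autocorr ds w \<Delta>)"
proof -
  define F where "F i i' = w i * psi i * cnj (w i' * psi i')" for i i'
  have "(\<Sum>i\<in>grp ds. w i * psi i) * cnj (\<Sum>i\<in>grp ds. w i * psi i)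
      = (\<Sum>i'\<in>grp ds. \<Sum>i\<in>grp ds. F i i')"
    unfolding F_def cnj_sum sum_product by (rule sum.swap)
  also have "\<dots> = (\<Sum>i'\<in>grp ds. \<Sum>\<Delta>\<in>grp ds. F (gadd ds i' \<Delta>) i')"
  proof (rule sum.cong[OF refl])
    fix i'
    show "(\<Sum>i\<in>grp ds. F i i') = (\<Sum>\<Delta>\<in>grp ds. F (gadd ds i' \<Delta>) i')"
      unfolding gadd_commute[of ds i'] by (rule sum_translate[OF pos, symmetric])
  qed
  also have "\<dots> = (\<Sum>i'\<in>grp ds. \<Sum>\<Delta>\<in>grp ds. psi \<Delta> * (w (gadd ds i' \<Delta>) * cnj (w i')))"
  proof (intro sum.cong refl)
    fix i' \<Delta>
    have "F (gadd ds i' \<Delta>) i' = psi \<Delta> * (w (gadd ds i' \<Delta>) * cnj (w i')) * (cnj (psi i') * psi i')"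
      unfolding F_def hom by (simp add: mult_ac)
    then show "F (gadd ds i' \<Delta>) i' = psi \<Delta> * (w (gadd ds i' \<Delta>) * cnj (w i'))"
      by (simp add: cnj_mult_unit[OF unit])
  qed
  also have "\<dots> = (\<Sum>\<Delta>\<in>grp ds. psi \<Delta> * autocorr ds w \<Delta>)"
    unfolding autocorr_def sum_distrib_left by (rule sum.swap)
  finally show ?thesis .
qed


section \<open>Flat matrices: orthogonal columns versus orthogonal rows\<close>

text \<open>The Gram matrices of the rows and of the columns of a square matrix E have the same
  Frobenius norm: both sides equal the sum over i, i', t, t' of
  conj(E_it) E_i't E_it' conj(E_i't').\<close>
lemma gram_frobenius_swap:
  fixes E :: "'i \<Rightarrow> 'i \<Rightarrow> complex"
  shows "(\<Sum>i\<in>I. \<Sum>i'\<in>I. (\<Sum>t\<in>I. cnj (E i t) * E i' t) * cnj (\<Sum>t\<in>I. cnj (E i t) * E i' t))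
       = (\<Sum>r\<in>I. \<Sum>s\<in>I. (\<Sum>i\<in>I. cnj (E i r) * E i s) * cnj (\<Sum>i\<in>I. cnj (E i r) * E i s))"
proof -
  have "(\<Sum>i\<in>I. \<Sum>i'\<in>I. (\<Sum>t\<in>I. cnj (E i t) * E i' t) * cnj (\<Sum>t\<in>I. cnj (E i t) * E i' t))
      = (\<Sum>i\<in>I. \<Sum>i'\<in>I. \<Sum>t\<in>I. \<Sum>t'\<in>I. cnj (E i t) * E i' t * (E i t' * cnj (E i' t')))"
    by (simp only: cnj_sum sum_product complex_cnj_mult complex_cnj_cnj)
  also have "\<dots> = (\<Sum>t\<in>I. \<Sum>t'\<in>I. \<Sum>i\<in>I. \<Sum>i'\<in>I. cnj (E i t) * E i' t * (E i t' * cnj (E i' t')))"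
    by (subst sum.swap[of _ _ I], subst (2) sum.swap, subst (1) sum.swap) (rule sum.swap)
  also have "\<dots> = (\<Sum>t\<in>I. \<Sum>t'\<in>I. \<Sum>i\<in>I. \<Sum>i'\<in>I. (cnj (E i t) * E i t') * (E i' t * cnj (E i' t')))"
    by (intro sum.cong refl) (simp only: mult_ac)
  also have "\<dots> = (\<Sum>t\<in>I. \<Sum>t'\<in>I. (\<Sum>i\<in>I. cnj (E i t) * E i t') * (\<Sum>i'\<in>I. E i' t * cnj (E i' t')))"
    by (simp only: sum_product)
  also have "\<dots> = (\<Sum>r\<in>I. \<Sum>s\<in>I. (\<Sum>i\<in>I. cnj (E i r) * E i s) * cnj (\<Sum>i\<in>I. cnj (E i r) * E i s))"
    by (simp only: cnj_sum complex_cnj_mult complex_cnj_cnj)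
  finally show ?thesis .
qed

lemma frobenius_constant_diagonal:
  fixes X :: "'i \<Rightarrow> 'i \<Rightarrow> complex"
  assumes "finite I" and "\<forall>i\<in>I. X i i = c"
  shows "(\<Sum>i\<in>I. \<Sum>i'\<in>I. X i i' * cnj (X i i')) =
     of_real (real (card I) * (norm c)^2 + (\<Sum>i\<in>I. \<Sum>i'\<in>I-{i}. (norm (X i i'))^2))"
proof -
  have "(\<Sum>i\<in>I. \<Sum>i'\<in>I. X i i' * cnj (X i i')) = of_real (\<Sum>i\<in>I. \<Sum>i'\<in>I. (norm (X i i'))^2)"
    by (simp flip: complex_norm_square)
  also have "(\<Sum>i\<in>I. \<Sum>i'\<in>I. (norm (X i i'))^2) = (\<Sum>i\<in>I. (norm c)^2 + (\<Sum>i'\<in>I-{i}. (norm (X i i'))^2))"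
    by (rule sum.cong[OF refl]) (use assms in \<open>simp add: sum.remove\<close>)
  finally show ?thesis by (simp add: sum.distrib)
qed

lemma offdiagonal_mass_eq_0_iff:
  fixes X :: "'i \<Rightarrow> 'i \<Rightarrow> complex"
  assumes "finite I"
  shows "(\<Sum>i\<in>I. \<Sum>i'\<in>I-{i}. (norm (X i i'))^2) = 0 \<longleftrightarrow> (\<forall>i\<in>I. \<forall>i'\<in>I. i \<noteq> i' \<longrightarrow> X i i' = 0)"
proof -
  have inner: "(\<Sum>i'\<in>I-{i}. (norm (X i i'))^2) = 0 \<longleftrightarrow> (\<forall>i'\<in>I-{i}. X i i' = 0)" for i
    using assms by (subst sum_nonneg_eq_0_iff) auto
  have "(\<Sum>i\<in>I. \<Sum>i'\<in>I-{i}. (norm (X i i'))^2) = 0 \<longleftrightarrow> (\<forall>i\<in>I. (\<Sum>i'\<in>I-{i}. (norm (X i i'))^2) = 0)"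
    using assms by (intro sum_nonneg_eq_0_iff) (auto intro: sum_nonneg)
  then show ?thesis by (auto simp only: inner)
qed

text \<open>A flat square matrix has orthogonal columns iff it has orthogonal rows: both Gram
  matrices have constant diagonal card(I) and equal Frobenius norms, hence equal
  off-diagonal masses.\<close>
lemma orthogonal_columns_iff_rows:
  fixes E :: "'i \<Rightarrow> 'i \<Rightarrow> complex"
  assumes fin: "finite I" and fl: "flat I E"
  shows "orthogonal_rows I (\<lambda>i j. E j i) \<longleftrightarrow> orthogonal_rows I E"
proof -
  define P where "P i i' = (\<Sum>t\<in>I. cnj (E i t) * E i' t)" for i i'
  define Q where "Q r s = (\<Sum>i\<in>I. cnj (E i r) * E i s)" for r s
  have unit: "cnj (E i j) * E i j = 1" if "i \<in> I" "j \<in> I" for i j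
    using fl that by (simp add: flat_def cnj_mult_unit)
  have diagP: "\<forall>i\<in>I. P i i = of_nat (card I)" and diagQ: "\<forall>i\<in>I. Q i i = of_nat (card I)"
    by (simp_all add: P_def Q_def unit)
  let ?diag = "real (card I) * (norm (of_nat (card I) :: complex))^2"
  have "(of_real (?diag + (\<Sum>i\<in>I. \<Sum>i'\<in>I-{i}. (norm (P i i'))^2)) :: complex)
      = (\<Sum>i\<in>I. \<Sum>i'\<in>I. P i i' * cnj (P i i'))"
    by (rule frobenius_constant_diagonal[where X=P, OF fin diagP, symmetric])
  also have "\<dots> = (\<Sum>r\<in>I. \<Sum>s\<in>I. Q r s * cnj (Q r s))"
    unfolding P_def Q_def by (rule gram_frobenius_swap)
  also have "\<dots> = of_real (?diag + (\<Sum>i\<in>I. \<Sum>i'\<in>I-{i}. (norm (Q i i'))^2))"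
    by (rule frobenius_constant_diagonal[where X=Q, OF fin diagQ])
  finally have "(\<Sum>i\<in>I. \<Sum>i'\<in>I-{i}. (norm (P i i'))^2) = (\<Sum>i\<in>I. \<Sum>i'\<in>I-{i}. (norm (Q i i'))^2)"
    by (simp only: of_real_eq_iff add_left_cancel)
  then have "(\<forall>i\<in>I. \<forall>i'\<in>I. i \<noteq> i' \<longrightarrow> Q i i' = 0) \<longleftrightarrow> (\<forall>i\<in>I. \<forall>i'\<in>I. i \<noteq> i' \<longrightarrow> P i i' = 0)"
    by (simp only: offdiagonal_mass_eq_0_iff[OF fin, symmetric])
  then show ?thesis
    by (simp add: orthogonal_rows_def braket_def P_def Q_def)
qed


lemma Mmat_cnj_mult:
  shows "cnj (Mmat ds A r i j) * Mmat ds A s i k =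
     (cnj (A i r) * A i s) * (cnj (chr ds j i) * chr ds k i) / of_nat (card (grp ds))"
proof -
  have "(of_real (sqrt (real (card (grp ds)))) :: complex) * of_real (sqrt (real (card (grp ds))))
      = of_nat (card (grp ds))"
    by (simp flip: of_real_mult)
  then show ?thesis
    by (simp add: Mmat_def fourier_def mult_ac)
qed

lemma Mmat_hadamard:
  assumes pos: "\<forall>d\<in>set ds. 0 < d" and fl: "flat (grp ds) A" and r: "r \<in> grp ds"
  shows "complex_hadamard (grp ds) (Mmat ds A r)"
  unfolding complex_hadamard_def unitary_mat_def
proof (intro conjI ballI)
  fix i j assume "i \<in> grp ds" "j \<in> grp ds"
  then have "norm (A i r) = 1" using fl r by (simp add: flat_def)
  then show "norm (Mmat ds A r i j) = 1 / sqrt (real (card (grp ds)))"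
    by (simp add: Mmat_def fourier_def norm_divide norm_mult)
next
  fix j k assume j: "j \<in> grp ds" and k: "k \<in> grp ds"
  have "(\<Sum>i\<in>grp ds. cnj (Mmat ds A r i j) * Mmat ds A r i k) =
        (\<Sum>i\<in>grp ds. cnj (chr ds j i) * chr ds k i) / of_nat (card (grp ds))"
    unfolding sum_divide_distrib
    by (rule sum.cong[OF refl]) (use fl r in \<open>simp add: Mmat_cnj_mult flat_def cnj_mult_unit\<close>)
  also have "\<dots> = (if j = k then 1 else 0)"
    using chr_orthogonal[OF pos j k] card_grp_pos[OF pos] by simp
  finally show "(\<Sum>i\<in>grp ds. cnj (Mmat ds A r i j) * Mmat ds A r i k) = (if j = k then 1 else 0)" .
qed

lemma norm_div_eq_inverse_sqrt_iff:
  assumes "0 < n"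
  shows "norm (z / of_nat n :: complex) = 1 / sqrt (real n) \<longleftrightarrow> z * cnj z = of_nat n"
proof -
  have s: "0 < sqrt (real n)" using assms by simp
  have "norm (z / of_nat n) = norm z / sqrt (real n) / sqrt (real n)"
    by (simp add: norm_divide divide_divide_eq_left)
  also have "\<dots> = 1 / sqrt (real n) \<longleftrightarrow> norm z = sqrt (real n)"
    using s by (auto simp: divide_eq_eq real_div_sqrt)
  also have "\<dots> \<longleftrightarrow> (norm z)^2 = real n"
    by (metis norm_ge_zero of_nat_0_le_iff real_sqrt_abs real_sqrt_pow2 abs_of_nonneg)
  also have "\<dots> \<longleftrightarrow> z * cnj z = of_nat n"
    by (metis complex_norm_square of_real_eq_iff of_real_of_nat_eq)
  finally show ?thesis .
qed

lemma mutually_unbiased_iff_autocorr: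
  assumes pos: "\<forall>d\<in>set ds. 0 < d" and fl: "flat (grp ds) A" and r: "r \<in> grp ds" and s: "s \<in> grp ds"
  shows "mutually_unbiased (grp ds) (Mmat ds A r) (Mmat ds A s) \<longleftrightarrow>
    (\<forall>\<Delta>\<in>grp ds. \<Delta> \<noteq> gzero ds \<longrightarrow> autocorr ds (\<lambda>i. cnj (A i r) * A i s) \<Delta> = 0)"
proof -
  let ?I = "grp ds" and ?n = "card (grp ds)"
  define w where "w i = cnj (A i r) * A i s" for i
  define T where "T j k = (\<Sum>i\<in>?I. w i * (cnj (chr ds j i) * chr ds k i))" for j k
  have flA: "norm (A i j) = 1" if "i \<in> ?I" "j \<in> ?I" for i j
    using fl that by (simp add: flat_def)
  have braket_T: "braket ?I (col (Mmat ds A r) j) (col (Mmat ds A s) k) = T j k / of_nat ?n" for j k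
    unfolding braket_def col_def T_def sum_divide_distrib
    by (rule sum.cong[OF refl]) (simp add: Mmat_cnj_mult w_def)
  have T_sq: "T j k * cnj (T j k) = (\<Sum>\<Delta>\<in>?I. cnj (chr ds j \<Delta>) * chr ds k \<Delta> * autocorr ds w \<Delta>)" for j k
    unfolding T_def
    by (rule norm_sq_sum_autocorr[OF pos]) (simp_all add: chr_gadd[OF pos] norm_mult)
  have autocorr_0: "autocorr ds w (gzero ds) = of_nat ?n"
  proof -
    have "w i * cnj (w i) = (cnj (A i r) * A i r) * (cnj (A i s) * A i s)" for i
      by (simp add: w_def mult_ac)
    then have "w i * cnj (w i) = 1" if "i \<in> ?I" for i
      using flA[OF that r] flA[OF that s] by (simp add: cnj_mult_unit)
    then show ?thesis by (simp add: autocorr_def gadd_gzero)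
  qed
  have "mutually_unbiased ?I (Mmat ds A r) (Mmat ds A s) \<longleftrightarrow>
      (\<forall>j\<in>?I. \<forall>k\<in>?I. T j k * cnj (T j k) = of_nat ?n)"
    unfolding mutually_unbiased_def braket_T norm_div_eq_inverse_sqrt_iff[OF card_grp_pos[OF pos]] ..
  also have "\<dots> \<longleftrightarrow> (\<forall>\<Delta>\<in>?I. \<Delta> \<noteq> gzero ds \<longrightarrow> autocorr ds w \<Delta> = 0)"
    unfolding T_sq by (rule twisted_transforms_constant_iff[where f="autocorr ds w", OF pos autocorr_0])
  finally show ?thesis by (simp only: w_def[abs_def])
qed

lemma autocorr_eq_braket_Dmat:
  assumes fl: "flat (grp ds) A" and r: "r \<in> grp ds" and s: "s \<in> grp ds"
  shows "autocorr ds (\<lambda>i. cnj (A i r) * A i s) \<Delta> =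
    braket (grp ds) (col (Dmat ds A \<Delta>) r) (col (Dmat ds A \<Delta>) s)"
  unfolding autocorr_def braket_def col_def
proof (rule sum.cong[OF refl])
  fix i assume i: "i \<in> grp ds"
  have "norm (A i r) = 1" "norm (A i s) = 1" using fl i r s by (auto simp: flat_def)
  then show "cnj (A (gadd ds i \<Delta>) r) * A (gadd ds i \<Delta>) s * cnj (cnj (A i r) * A i s) =
      cnj (Dmat ds A \<Delta> i r) * Dmat ds A \<Delta> i s"
    by (simp add: Dmat_def inverse_unit mult_ac)
qed

lemma flat_Dmat:
  assumes pos: "\<forall>d\<in>set ds. 0 < d" and fl: "flat (grp ds) A"
  shows "flat (grp ds) (Dmat ds A \<Delta>)"
  using fl gadd_in_grp[OF pos] by (simp add: flat_def Dmat_def norm_mult norm_inverse)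


theorem mainTheorem13:
  fixes ds :: "nat list" and A :: "nat list \<Rightarrow> nat list \<Rightarrow> complex"
  assumes "\<forall>d\<in>set ds. 0 < d"
    and "flat (grp ds) A"
  shows "complete_MUH (grp ds) (grp ds) (Mmat ds A) \<longleftrightarrow>
    (\<forall>\<Delta>\<in>grp ds. \<Delta> \<noteq> gzero ds \<longrightarrow> orthogonal_rows (grp ds) (Dmat ds A \<Delta>))"
proof -
  note pos = assms(1) and fl = assms(2)
  let ?I = "grp ds"
  have "complete_MUH ?I ?I (Mmat ds A) \<longleftrightarrow>
      (\<forall>r\<in>?I. \<forall>s\<in>?I. r \<noteq> s \<longrightarrow> mutually_unbiased ?I (Mmat ds A r) (Mmat ds A s))"
    unfolding complete_MUH_def using Mmat_hadamard[OF pos fl] by auto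
  also have "\<dots> \<longleftrightarrow> (\<forall>\<Delta>\<in>?I. \<Delta> \<noteq> gzero ds \<longrightarrow> (\<forall>r\<in>?I. \<forall>s\<in>?I. r \<noteq> s \<longrightarrow>
      braket ?I (col (Dmat ds A \<Delta>) r) (col (Dmat ds A \<Delta>) s) = 0))"
    using mutually_unbiased_iff_autocorr[OF pos fl] autocorr_eq_braket_Dmat[OF fl] by auto
  also have "\<dots> \<longleftrightarrow> (\<forall>\<Delta>\<in>?I. \<Delta> \<noteq> gzero ds \<longrightarrow> orthogonal_rows ?I (\<lambda>i j. Dmat ds A \<Delta> j i))"
    by (simp add: orthogonal_rows_def col_def)
  also have "\<dots> \<longleftrightarrow> (\<forall>\<Delta>\<in>?I. \<Delta> \<noteq> gzero ds \<longrightarrow> orthogonal_rows ?I (Dmat ds A \<Delta>))"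
    using orthogonal_columns_iff_rows[OF grp_finite flat_Dmat[OF pos fl]] by simp
  finally show ?thesis .
qed

end
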